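(* Let $p$ be a prime and $G$ a finite group with $p\nmid |G|$. If $G$ acts by isometries on a nondegenerate lattice $L$ with $p\nmid\det(L)$, then $p\nmid \det(L^G)\det(L_G)$.
   Context: $L^G=\{l\in L: g(l)=l\ \forall g\in G\}$ is the invariant sublattice and $L_G=(L^G)^\perp\subset L$ the coinvariant sublattice. *)

theory Defs
  imports "HOL-Algebra.Group" "Jordan_Normal_Form.Determinant"
begin

text \<open>A lattice of rank n is modelled as Z^n (integer vectors of dimension n) with an
  integer symmetric Gram matrix B. Sublattices are sets of integer vectors.\<close>

definition is_lattice_basis :: "nat \<Rightarrow> int vec set \<Rightarrow> int mat \<Rightarrow> bool" where
  "is_lattice_basis n M V \<longleftrightarrow>
     dim_row V = n \<and>
     (\<forall>c \<in> carrier_vec (dim_col V). V *\<^sub>v c = 0\<^sub>v n \<longrightarrow> c = 0\<^sub>v (dim_col V)) \<and>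
     M = {V *\<^sub>v c | c. c \<in> carrier_vec (dim_col V)}"

definition lattice_det :: "int mat \<Rightarrow> int vec set \<Rightarrow> int" where
  "lattice_det B M =
     (let V = (SOME V. is_lattice_basis (dim_row B) M V) in det (transpose_mat V * B * V))"

definition invariant_sublattice :: "nat \<Rightarrow> ('g, 'b) monoid_scheme \<Rightarrow> ('g \<Rightarrow> int mat) \<Rightarrow> int vec set" where
  "invariant_sublattice n G \<rho> = {v \<in> carrier_vec n. \<forall>g \<in> carrier G. \<rho> g *\<^sub>v v = v}"

definition orth_complement :: "int mat \<Rightarrow> int vec set \<Rightarrow> int vec set" where
  "orth_complement B M = {v \<in> carrier_vec (dim_row B). \<forall>w \<in> M. v \<bullet> (B *\<^sub>v w) = 0}"

definition coinvariant_sublattice :: "int mat \<Rightarrow> ('g, 'b) monoid_scheme \<Rightarrow> ('g \<Rightarrow> int mat) \<Rightarrow> int vec set" where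
  "coinvariant_sublattice B G \<rho> = orth_complement B (invariant_sublattice (dim_row B) G \<rho>)"

end

theory Submission
  imports Defs
begin

text \<open>
  The matrix \<open>inv_proj = \<Sum>\<^sub>g \<rho>(g)\<close> maps \<open>\<int>\<^sup>n\<close> into \<open>L\<^sup>G\<close> and acts on \<open>L\<^sup>G\<close> as \<open>|G|\<close>;
  likewise \<open>coinv_proj = |G| - inv_proj\<close> maps \<open>\<int>\<^sup>n\<close> into \<open>L\<^sub>G\<close> and acts on \<open>L\<^sub>G\<close> as \<open>|G|\<close>.
  Both are self-adjoint for \<open>B\<close> because \<open>G\<close> acts by isometries.

  Now let \<open>X\<close> be any integral \<open>B\<close>-self-adjoint matrix mapping \<open>\<int>\<^sup>n\<close> into a sublattice \<open>M\<close>
  with basis \<open>V\<close> and acting on \<open>M\<close> as multiplication by \<open>N\<close>. Then \<open>X = V A\<close> with \<open>A V = N\<close>,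
  and self-adjointness gives \<open>A\<^sup>T (V\<^sup>T B V) = N B V\<close>; multiplying by \<open>A adj(B)\<close> yields
  \<open>(A adj(B) A\<^sup>T) (V\<^sup>T B V) = N\<^sup>2 det(B)\<close>. Hence \<open>det M\<close> divides a power of \<open>N\<^sup>2 det(B)\<close>, which for
  \<open>N = |G|\<close> is prime to \<open>p\<close>. (The bases exist because every subgroup of \<open>\<int>\<^sup>n\<close> is free.)
\<close>

definition int_submodule :: "nat \<Rightarrow> int vec set \<Rightarrow> bool" where
  "int_submodule n M \<longleftrightarrow> M \<subseteq> carrier_vec n \<and> 0\<^sub>v n \<in> M \<and> (\<forall>x\<in>M. \<forall>y\<in>M. x + y \<in> M)
     \<and> (\<forall>x\<in>M. \<forall>c. c \<cdot>\<^sub>v x \<in> M)"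

lemma int_submodule_add_smult:
  assumes "int_submodule n M" "x \<in> M" "y \<in> M"
  shows "x + c \<cdot>\<^sub>v y \<in> M"
  using assms unfolding int_submodule_def by blast

lemma lattice_basis_zero: "is_lattice_basis n {0\<^sub>v n} (0\<^sub>m n 0 :: int mat)"
proof -
  have "0\<^sub>m n 0 *\<^sub>v c = 0\<^sub>v n" if "c \<in> carrier_vec 0" for c :: "int vec"
    using that by (intro eq_vecI) (auto simp: scalar_prod_def)
  then show ?thesis
    unfolding is_lattice_basis_def by (auto intro!: exI[of _ "0\<^sub>v 0"])
qed

lemma int_submodule_coordinate_generator:
  assumes M: "int_submodule n M" and k: "k < n"
  obtains m where "m \<in> M" "\<And>v. v \<in> M \<Longrightarrow> m $ k dvd v $ k"
proof (cases "\<forall>v\<in>M. v $ k = 0")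
  case True
  then show ?thesis using M that unfolding int_submodule_def by auto
next
  case False
  then obtain v0 where v0: "v0 \<in> M" "v0 $ k \<noteq> 0" by auto
  have Mc: "M \<subseteq> carrier_vec n" and Msmult: "\<And>x c. x \<in> M \<Longrightarrow> c \<cdot>\<^sub>v x \<in> M"
    using M unfolding int_submodule_def by auto
  have "(sgn (v0 $ k) \<cdot>\<^sub>v v0) $ k = \<bar>v0 $ k\<bar>"
    using v0 Mc k by (auto simp: abs_sgn)
  then have ex: "\<exists>d::nat. d > 0 \<and> (\<exists>v\<in>M. v $ k = int d)"
    using v0 Msmult by (intro exI[of _ "nat \<bar>v0 $ k\<bar>"]) auto
  define d where "d = (LEAST d::nat. d > 0 \<and> (\<exists>v\<in>M. v $ k = int d))"
  obtain m where m: "m \<in> M" "m $ k = int d" and d: "d > 0"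
    using LeastI_ex[OF ex] unfolding d_def[symmetric] by blast
  have d_min: "d \<le> e" if "e > 0" "\<exists>v\<in>M. v $ k = int e" for e
    unfolding d_def using that by (intro Least_le) simp
  have "m $ k dvd v $ k" if v: "v \<in> M" for v
  proof -
    let ?r = "v $ k mod int d"
    let ?u = "v + (- (v $ k div int d)) \<cdot>\<^sub>v m"
    have "?u \<in> M" using int_submodule_add_smult[OF M v m(1)] .
    moreover have "?u $ k = ?r"
      using v m Mc k by (auto simp: minus_div_mult_eq_mod[symmetric])
    ultimately have "d \<le> nat ?r" if "?r > 0"
      using that by (intro d_min) auto
    moreover have "0 \<le> ?r" "?r < int d" using d by simp_all
    ultimately have "?r = 0" by linarith
    then show ?thesis using m by (simp add: dvd_eq_mod_eq_0)
  qed
  then show ?thesis using m that by blast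
qed

definition append_col :: "'a mat \<Rightarrow> 'a vec \<Rightarrow> 'a mat" where
  "append_col V m = mat (dim_row V) (Suc (dim_col V)) (\<lambda>(i,j). if j < dim_col V then V $$ (i,j) else m $ i)"

lemma append_col_mult_mat_vec:
  fixes V :: "'a :: comm_ring_1 mat"
  assumes V: "V \<in> carrier_mat n r" and m: "m \<in> carrier_vec n" and c: "c \<in> carrier_vec (Suc r)"
  shows "append_col V m *\<^sub>v c = V *\<^sub>v vec r (\<lambda>j. c $ j) + c $ r \<cdot>\<^sub>v m"
  using V m c unfolding append_col_def
  by (intro eq_vecI) (simp_all add: scalar_prod_def sum.atLeast0_lessThan_Suc mult.commute)

lemma append_col_mult_mat_vec_range:
  fixes V :: "'a :: comm_ring_1 mat"
  assumes V: "V \<in> carrier_mat n r" and m: "m \<in> carrier_vec n"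
  shows "{append_col V m *\<^sub>v c | c. c \<in> carrier_vec (Suc r)} = {V *\<^sub>v c + q \<cdot>\<^sub>v m | c q. c \<in> carrier_vec r}"
proof (intro equalityI subsetI)
  fix x assume "x \<in> {V *\<^sub>v c + q \<cdot>\<^sub>v m | c q. c \<in> carrier_vec r}"
  then obtain c q where c: "c \<in> carrier_vec r" and x: "x = V *\<^sub>v c + q \<cdot>\<^sub>v m" by blast
  define c' where "c' = vec (Suc r) (\<lambda>j. if j < r then c $ j else q)"
  have c': "c' \<in> carrier_vec (Suc r)" unfolding c'_def by simp
  have "vec r (\<lambda>j. c' $ j) = c" "c' $ r = q" using c unfolding c'_def by (auto intro!: eq_vecI)
  then have "x = append_col V m *\<^sub>v c'"
    unfolding x append_col_mult_mat_vec[OF V m c'] by simp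
  then show "x \<in> {append_col V m *\<^sub>v c
      | c. c \<in> carrier_vec (Suc r)}" using c' by blast
next
  fix x assume "x \<in> {append_col V m *\<^sub>v c
      | c. c \<in> carrier_vec (Suc r)}"
  then obtain c where "c \<in> carrier_vec (Suc r)"
    and "x = append_col V m *\<^sub>v c" by blast
  then have "x = V *\<^sub>v vec r (\<lambda>j. c $ j) + c $ r \<cdot>\<^sub>v m" using append_col_mult_mat_vec[OF V m] by simp
  then show "x \<in> {V *\<^sub>v c + q \<cdot>\<^sub>v m | c q. c \<in> carrier_vec r}" using vec_carrier by blast
qed

lemma lattice_basis_append_col:
  fixes V :: "int mat"
  assumes V: "is_lattice_basis n M' V" and m: "m \<in> carrier_vec n" and k: "k < n" "m $ k \<noteq> 0"
    and M'k: "\<And>v. v \<in> M' \<Longrightarrow> v $ k = 0"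
    and M: "M = {v + q \<cdot>\<^sub>v m | v q. v \<in> M'}"
  shows "is_lattice_basis n M (append_col V m)"
proof -
  define r where "r = dim_col V"
  have Vc: "V \<in> carrier_mat n r"
    and Vinj: "\<And>c. c \<in> carrier_vec r \<Longrightarrow> V *\<^sub>v c = 0\<^sub>v n \<Longrightarrow> c = 0\<^sub>v r"
    and M': "M' = {V *\<^sub>v c | c. c \<in> carrier_vec r}"
    using V unfolding r_def is_lattice_basis_def by auto
  let ?W = "append_col V m"
  have W: "?W *\<^sub>v c = V *\<^sub>v vec r (\<lambda>j. c $ j) + c $ r \<cdot>\<^sub>v m" if "c \<in> carrier_vec (Suc r)" for c
    by (rule append_col_mult_mat_vec[OF Vc m that])
  have dimW: "dim_row ?W = n" "dim_col ?W = Suc r" using Vc unfolding append_col_def by auto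
  have inj: "c = 0\<^sub>v (Suc r)" if c: "c \<in> carrier_vec (Suc r)" and z: "?W *\<^sub>v c = 0\<^sub>v n" for c
  proof -
    let ?c0 = "vec r (\<lambda>j. c $ j)"
    have "V *\<^sub>v ?c0 \<in> M'" unfolding M' by auto
    then have "(V *\<^sub>v ?c0) $ k = 0" by (rule M'k)
    moreover have "(V *\<^sub>v ?c0) $ k + c $ r * m $ k = (?W *\<^sub>v c) $ k"
      unfolding W[OF c] using k Vc m by simp
    ultimately have "c $ r * m $ k = 0" using z k by simp
    then have cr: "c $ r = 0" using k by simp
    moreover have "0 \<cdot>\<^sub>v m + V *\<^sub>v ?c0 = V *\<^sub>v ?c0"
      using Vc m by (intro eq_vecI) auto
    ultimately have "V *\<^sub>v ?c0 = 0\<^sub>v n" using z W[OF c] Vc m by (simp add: comm_add_vec[of _ n])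
    then have "?c0 = 0\<^sub>v r" using Vinj by simp
    then show ?thesis using c cr by (auto simp: vec_eq_iff less_Suc_eq)
  qed
  have span: "M = {?W *\<^sub>v c | c. c \<in> carrier_vec (Suc r)}"
    using append_col_mult_mat_vec_range[OF Vc m] unfolding M M' by blast
  show ?thesis
    unfolding is_lattice_basis_def dimW using inj span by simp
qed

lemma int_submodule_coordinate_kernel:
  assumes M: "int_submodule n M" and k: "k < n"
  shows "int_submodule n {v \<in> M. v $ k = 0}"
proof -
  have Mc: "M \<subseteq> carrier_vec n" and M0: "0\<^sub>v n \<in> M"
    and Madd: "\<And>x y. x \<in> M \<Longrightarrow> y \<in> M \<Longrightarrow> x + y \<in> M"
    and Msmult: "\<And>x c. x \<in> M \<Longrightarrow> c \<cdot>\<^sub>v x \<in> M"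
    using M unfolding int_submodule_def by auto
  have "x + y \<in> {v \<in> M. v $ k = 0}" if "x \<in> {v \<in> M. v $ k = 0}" "y \<in> {v \<in> M. v $ k = 0}" for x y
    using that Madd Mc k by auto
  moreover have "c \<cdot>\<^sub>v x \<in> {v \<in> M. v $ k = 0}" if "x \<in> {v \<in> M. v $ k = 0}" for x c
    using that Msmult Mc k by auto
  ultimately show ?thesis using Mc M0 k unfolding int_submodule_def by auto
qed

lemma int_submodule_coordinate_decomp:
  assumes M: "int_submodule n M" and k: "k < n"
    and m: "m \<in> M" and m_dvd: "\<And>v. v \<in> M \<Longrightarrow> m $ k dvd v $ k"
  shows "M = {v + q \<cdot>\<^sub>v m | v q. v \<in> {v \<in> M. v $ k = 0}}"
proof (intro equalityI subsetI)
  have Mc: "M \<subseteq> carrier_vec n" using M unfolding int_submodule_def by auto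
  fix x assume x: "x \<in> M"
  define q where "q = x $ k div m $ k"
  have "x + (- q) \<cdot>\<^sub>v m \<in> {v \<in> M. v $ k = 0}"
    using int_submodule_add_smult[OF M x m] m_dvd[OF x] x m Mc k unfolding q_def by auto
  moreover have "x \<in> carrier_vec n" "m \<in> carrier_vec n" using x m Mc by auto
  then have "x = (x + (- q) \<cdot>\<^sub>v m) + q \<cdot>\<^sub>v m" by (intro eq_vecI) auto
  ultimately show "x \<in> {v + q \<cdot>\<^sub>v m | v q. v \<in> {v \<in> M. v $ k = 0}}" by blast
qed (use int_submodule_add_smult[OF M _ m] in auto)

lemma int_submodule_has_lattice_basis:
  assumes "int_submodule n M"
  shows "\<exists>V. is_lattice_basis n M V"
proof -
  have "\<exists>V. is_lattice_basis n M V"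
    if "k \<le> n" "int_submodule n M" "\<forall>v\<in>M. \<forall>i\<in>{k..<n}. v $ i = 0" for k M
    using that
  proof (induction k arbitrary: M)
    case 0
    then have "M = {0\<^sub>v n}" unfolding int_submodule_def by (auto simp: vec_eq_iff)
    then show ?case using lattice_basis_zero by blast
  next
    case (Suc k)
    have M: "int_submodule n M" and k: "k < n" using Suc.prems by auto
    have Mc: "M \<subseteq> carrier_vec n" using M unfolding int_submodule_def by auto
    define M' where "M' = {v \<in> M. v $ k = 0}"
    have "int_submodule n M'"
      unfolding M'_def by (rule int_submodule_coordinate_kernel[OF M k])
    moreover have "\<forall>v\<in>M'. \<forall>i\<in>{k..<n}. v $ i = 0"
      using Suc.prems(3) unfolding M'_def
      by (metis (mono_tags, lifting) atLeastLessThan_iff le_neq_implies_less Suc_leI mem_Collect_eq)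
    ultimately obtain V where V: "is_lattice_basis n M' V"
      using Suc.IH k by (meson Suc_leD less_imp_le_nat)
    obtain m where m: "m \<in> M" and m_dvd: "\<And>v. v \<in> M \<Longrightarrow> m $ k dvd v $ k"
      using int_submodule_coordinate_generator[OF M k] by blast
    show ?case
    proof (cases "m $ k = 0")
      case True
      then have "M' = M" using m_dvd unfolding M'_def by auto
      then show ?thesis using V by blast
    next
      case False
      then show ?thesis
        using lattice_basis_append_col[OF V[unfolded M'_def] _ k False _
            int_submodule_coordinate_decomp[OF M k m m_dvd]] m Mc by blast
    qed
  qed
  from this[of n M] show ?thesis using assms by simp
qed

lemma col_eq_mult_unit_vec:
  fixes X :: "'a :: semiring_1 mat"
  assumes "X \<in> carrier_mat nr n" "k < n"
  shows "col X k = X *\<^sub>v unit_vec n k"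
proof -
  have "col X k = col (X * 1\<^sub>m n) k" by (simp only: right_mult_one_mat[OF assms(1)])
  also have "\<dots> = X *\<^sub>v unit_vec n k"
    by (simp only: col_mult2[OF assms(1) one_carrier_mat assms(2)] col_one[OF assms(2)])
  finally show ?thesis .
qed

lemma lattice_basis_col_mem:
  assumes V: "is_lattice_basis n M V" and j: "j < dim_col V"
  shows "col V j \<in> M"
proof -
  have "col V j = V *\<^sub>v unit_vec (dim_col V) j"
    using V j unfolding is_lattice_basis_def by (intro col_eq_mult_unit_vec) auto
  then show ?thesis using V unfolding is_lattice_basis_def by auto
qed

lemma lattice_basis_factor:
  fixes V X :: "int mat"
  assumes V: "is_lattice_basis n M V" and X: "X \<in> carrier_mat n m"
    and XM: "\<And>x. x \<in> carrier_vec m \<Longrightarrow> X *\<^sub>v x \<in> M"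
  obtains A where "A \<in> carrier_mat (dim_col V) m" "X = V * A"
proof -
  define r where "r = dim_col V"
  have Vc: "V \<in> carrier_mat n r" and M: "M = {V *\<^sub>v c | c. c \<in> carrier_vec r}"
    using V unfolding r_def is_lattice_basis_def by auto
  have ex: "\<exists>a. a \<in> carrier_vec r \<and> col X k = V *\<^sub>v a" if k: "k < m" for k
  proof -
    have "col X k \<in> M" using XM[of "unit_vec m k"] col_eq_mult_unit_vec[OF X k] by simp
    then show ?thesis unfolding M by blast
  qed
  define f where "f k = (SOME a. a \<in> carrier_vec r \<and> col X k = V *\<^sub>v a)" for k
  have f: "f k \<in> carrier_vec r \<and> col X k = V *\<^sub>v f k" if "k < m" for k
    unfolding f_def by (rule someI_ex[OF ex[OF that]])
  define A where "A = mat r m (\<lambda>(i,k). f k $ i)"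
  have A: "A \<in> carrier_mat r m" unfolding A_def by simp
  have "V * A = X"
  proof (rule mat_col_eqI)
    fix k assume "k < dim_col X"
    then have k: "k < m" using X by simp
    have "col A k = f k" using f[OF k] k unfolding A_def by (auto intro!: eq_vecI)
    then show "col (V * A) k = col X k" using col_mult2[OF Vc A k] f[OF k] by metis
  qed (use mult_carrier_mat[OF Vc A] X in \<open>simp_all only: carrier_matD\<close>)
  then show ?thesis using that A unfolding r_def by metis
qed

lemma lattice_basis_mult_left_cancel:
  fixes V :: "int mat"
  assumes V: "is_lattice_basis n M V"
    and Y: "Y \<in> carrier_mat (dim_col V) k" and Z: "Z \<in> carrier_mat (dim_col V) k"
    and VYZ: "V * Y = V * Z"
  shows "Y = Z"
proof (rule mat_col_eqI)
  fix j assume "j < dim_col Z"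
  then have j: "j < k" using Z by simp
  have Vc: "V \<in> carrier_mat n (dim_col V)"
    and Vinj: "\<And>c. c \<in> carrier_vec (dim_col V) \<Longrightarrow> V *\<^sub>v c = 0\<^sub>v n \<Longrightarrow> c = 0\<^sub>v (dim_col V)"
    using V unfolding is_lattice_basis_def by auto
  have cY: "col Y j \<in> carrier_vec (dim_col V)" and cZ: "col Z j \<in> carrier_vec (dim_col V)"
    using Y Z j by auto
  have "V *\<^sub>v (col Y j - col Z j) = V *\<^sub>v col Y j - V *\<^sub>v col Z j"
    by (rule mult_minus_distrib_mat_vec[OF Vc cY cZ])
  also have "\<dots> = col (V * Y) j - col (V * Z) j"
    by (simp only: col_mult2[OF Vc Y j] col_mult2[OF Vc Z j])
  also have "\<dots> = 0\<^sub>v n"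
    unfolding VYZ by (rule minus_cancel_vec[OF col_carrier_vec[OF j mult_carrier_mat[OF Vc Z]]])
  finally have "col Y j - col Z j = 0\<^sub>v (dim_col V)"
    using cY cZ by (intro Vinj minus_carrier_vec)
  then show "col Y j = col Z j"
    using cY cZ by (metis carrier_vecD index_minus_vec index_zero_vec eq_iff_diff_eq_0 eq_vecI)
qed (metis Y Z carrier_matD(1), metis Y Z carrier_matD(2))

lemma lattice_basis_intertwining:
  fixes B V X :: "int mat" and N :: int
  assumes B: "B \<in> carrier_mat n n" and V: "is_lattice_basis n M V" and X: "X \<in> carrier_mat n n"
    and X_into: "\<And>x. x \<in> carrier_vec n \<Longrightarrow> X *\<^sub>v x \<in> M"
    and X_on: "\<And>v. v \<in> M \<Longrightarrow> X *\<^sub>v v = N \<cdot>\<^sub>v v"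
    and BX: "B * X = transpose_mat X * B"
  obtains A where "A \<in> carrier_mat (dim_col V) n" "A * V = N \<cdot>\<^sub>m 1\<^sub>m (dim_col V)"
    "transpose_mat A * (transpose_mat V * B * V) = N \<cdot>\<^sub>m (B * V)"
proof -
  define r where "r = dim_col V"
  have Vc: "V \<in> carrier_mat n r" using V unfolding r_def is_lattice_basis_def by auto
  have VT: "transpose_mat V \<in> carrier_mat r n" using Vc by simp
  obtain A where A: "A \<in> carrier_mat r n" and XVA: "X = V * A"
    using lattice_basis_factor[OF V X X_into] unfolding r_def by blast
  have AT: "transpose_mat A \<in> carrier_mat n r" using A by simp
  have XV: "X * V = N \<cdot>\<^sub>m V"
  proof (rule mat_col_eqI)
    fix j assume "j < dim_col (N \<cdot>\<^sub>m V)"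
    then have j: "j < r" using Vc by simp
    have "col V j \<in> M" using lattice_basis_col_mem[OF V] j unfolding r_def by simp
    then have "col (X * V) j = N \<cdot>\<^sub>v col V j"
      unfolding col_mult2[OF X Vc j] by (rule X_on)
    then show "col (X * V) j = col (N \<cdot>\<^sub>m V) j" using Vc j by simp
  qed (use X Vc in simp_all)
  have "A * V = N \<cdot>\<^sub>m 1\<^sub>m r"
  proof (rule lattice_basis_mult_left_cancel[OF V])
    have "V * (A * V) = X * V" unfolding XVA by (rule assoc_mult_mat[OF Vc A Vc, symmetric])
    also have "\<dots> = V * (N \<cdot>\<^sub>m 1\<^sub>m r)"
      unfolding XV mult_smult_distrib[OF Vc one_carrier_mat] right_mult_one_mat[OF Vc] ..
    finally show "V * (A * V) = V * (N \<cdot>\<^sub>m 1\<^sub>m r)" .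
    show "A * V \<in> carrier_mat (dim_col V) r" "N \<cdot>\<^sub>m 1\<^sub>m r \<in> carrier_mat (dim_col V) r"
      using mult_carrier_mat[OF A Vc] unfolding r_def by auto
  qed
  moreover have "transpose_mat A * (transpose_mat V * B * V) = N \<cdot>\<^sub>m (B * V)"
  proof -
    have "N \<cdot>\<^sub>m (B * V) = B * (X * V)" unfolding XV by (rule mult_smult_distrib[OF B Vc, symmetric])
    also have "\<dots> = transpose_mat X * B * V"
      unfolding BX[symmetric] by (rule assoc_mult_mat[OF B X Vc, symmetric])
    also have "\<dots> = transpose_mat A * transpose_mat V * B * V" unfolding XVA transpose_mult[OF Vc A] ..
    also have "\<dots> = transpose_mat A * (transpose_mat V * B * V)"
      unfolding assoc_mult_mat[OF AT VT B] assoc_mult_mat[OF AT mult_carrier_mat[OF VT B] Vc] ..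
    finally show ?thesis by simp
  qed
  ultimately show ?thesis using that A unfolding r_def by blast
qed

lemma lattice_basis_gram_det_dvd:
  fixes B V X :: "int mat" and N :: int
  assumes B: "B \<in> carrier_mat n n" and V: "is_lattice_basis n M V" and X: "X \<in> carrier_mat n n"
    and X_into: "\<And>x. x \<in> carrier_vec n \<Longrightarrow> X *\<^sub>v x \<in> M"
    and X_on: "\<And>v. v \<in> M \<Longrightarrow> X *\<^sub>v v = N \<cdot>\<^sub>v v"
    and BX: "B * X = transpose_mat X * B"
  shows "det (transpose_mat V * B * V) dvd (N\<^sup>2 * det B) ^ dim_col V"
proof -
  define r where "r = dim_col V"
  define Gr where "Gr = transpose_mat V * B * V"
  have Vc: "V \<in> carrier_mat n r" using V unfolding r_def is_lattice_basis_def by auto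
  have Gr: "Gr \<in> carrier_mat r r" unfolding Gr_def using Vc B by simp
  obtain A where A: "A \<in> carrier_mat r n" and AV: "A * V = N \<cdot>\<^sub>m 1\<^sub>m r"
    and ATGr: "transpose_mat A * Gr = N \<cdot>\<^sub>m (B * V)"
    using lattice_basis_intertwining[OF B V X X_into X_on BX] unfolding r_def Gr_def by blast
  have AT: "transpose_mat A \<in> carrier_mat n r" using A by simp
  have adj: "adj_mat B \<in> carrier_mat n n" "adj_mat B * B = det B \<cdot>\<^sub>m 1\<^sub>m n"
    using adj_mat[OF B] by auto
  define C where "C = A * adj_mat B"
  have C: "C \<in> carrier_mat r n" unfolding C_def using A adj(1) by simp
  have BV: "B * V \<in> carrier_mat n r" using B Vc by simp
  have CBV: "C * (B * V) = det B \<cdot>\<^sub>m (A * V)"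
    unfolding C_def assoc_mult_mat[OF A adj(1) BV] assoc_mult_mat[OF adj(1) B Vc, symmetric] adj(2)
      mult_smult_assoc_mat[OF one_carrier_mat Vc] left_mult_one_mat[OF Vc]
    by (rule mult_smult_distrib[OF A Vc])
  have "(C * transpose_mat A) * Gr = C * (transpose_mat A * Gr)" by (rule assoc_mult_mat[OF C AT Gr])
  also have "\<dots> = N \<cdot>\<^sub>m (det B \<cdot>\<^sub>m (A * V))"
    unfolding ATGr mult_smult_distrib[OF C BV] CBV ..
  also have "\<dots> = (N\<^sup>2 * det B) \<cdot>\<^sub>m 1\<^sub>m r"
    unfolding AV by (intro eq_matI) (auto simp: power2_eq_square)
  finally have "det (C * transpose_mat A) * det Gr = (N\<^sup>2 * det B) ^ r"
    using det_mult[OF mult_carrier_mat[OF C AT] Gr] by simp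
  then show ?thesis unfolding Gr_def r_def by (metis dvd_triv_right)
qed

lemma lattice_det_dvd_power:
  fixes B X :: "int mat" and N :: int
  assumes M: "int_submodule n M" and B: "B \<in> carrier_mat n n" and X: "X \<in> carrier_mat n n"
    and X_into: "\<And>x. x \<in> carrier_vec n \<Longrightarrow> X *\<^sub>v x \<in> M"
    and X_on: "\<And>v. v \<in> M \<Longrightarrow> X *\<^sub>v v = N \<cdot>\<^sub>v v"
    and BX: "B * X = transpose_mat X * B"
  shows "\<exists>r. lattice_det B M dvd (N\<^sup>2 * det B) ^ r"
proof -
  define V where "V = (SOME V. is_lattice_basis (dim_row B) M V)"
  have "is_lattice_basis n M V"
    unfolding V_def using B int_submodule_has_lattice_basis[OF M] by (simp add: someI_ex)
  then show ?thesis
    unfolding lattice_det_def Let_def V_def[symmetric]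
    using lattice_basis_gram_det_dvd[OF B _ X X_into X_on BX] by blast
qed

definition sum_mats :: "nat \<Rightarrow> nat \<Rightarrow> ('i \<Rightarrow> 'a :: comm_monoid_add mat) \<Rightarrow> 'i set \<Rightarrow> 'a mat" where
  "sum_mats nr nc F I = mat nr nc (\<lambda>(i,j). \<Sum>g\<in>I. F g $$ (i,j))"

lemma sum_mats_cong:
  "(\<And>g. g \<in> I \<Longrightarrow> F g = F' g) \<Longrightarrow> sum_mats nr nc F I = sum_mats nr nc F' I"
  unfolding sum_mats_def by (intro cong_mat refl) (simp add: case_prod_beta cong: sum.cong)

lemma sum_mats_carrier [simp]: "sum_mats nr nc F I \<in> carrier_mat nr nc"
  unfolding sum_mats_def by simp

lemma mult_sum_mats:
  fixes X :: "'a :: comm_semiring_0 mat"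
  assumes X: "X \<in> carrier_mat nr' nr" and F: "\<And>g. g \<in> I \<Longrightarrow> F g \<in> carrier_mat nr nc"
  shows "X * sum_mats nr nc F I = sum_mats nr' nc (\<lambda>g. X * F g) I"
proof (rule eq_matI)
  fix i j assume ij: "i < dim_row (sum_mats nr' nc (\<lambda>g. X * F g) I)"
    "j < dim_col (sum_mats nr' nc (\<lambda>g. X * F g) I)"
  then have "(X * sum_mats nr nc F I) $$ (i,j) = (\<Sum>k<nr. \<Sum>g\<in>I. X $$ (i,k) * F g $$ (k,j))"
    using X by (simp add: sum_mats_def scalar_prod_def sum_distrib_left atLeast0LessThan)
  also have "\<dots> = (\<Sum>g\<in>I. (X * F g) $$ (i,j))"
  proof (subst sum.swap, rule sum.cong)
    fix g assume "g \<in> I"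
    then show "(\<Sum>k<nr. X $$ (i,k) * F g $$ (k,j)) = (X * F g) $$ (i,j)"
      using ij X F[of g] by (simp add: sum_mats_def scalar_prod_def atLeast0LessThan)
  qed simp
  finally show "(X * sum_mats nr nc F I) $$ (i,j) = sum_mats nr' nc (\<lambda>g. X * F g) I $$ (i,j)"
    using ij by (simp add: sum_mats_def)
qed (use X in \<open>simp_all add: sum_mats_def\<close>)

lemma transpose_sum_mats:
  assumes "\<And>g. g \<in> I \<Longrightarrow> F g \<in> carrier_mat nr nc"
  shows "transpose_mat (sum_mats nr nc F I) = sum_mats nc nr (\<lambda>g. transpose_mat (F g)) I"
proof (rule eq_matI)
  fix i j assume "i < dim_row (sum_mats nc nr (\<lambda>g. transpose_mat (F g)) I)"
    "j < dim_col (sum_mats nc nr (\<lambda>g. transpose_mat (F g)) I)"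
  moreover have "F g $$ (j,i) = transpose_mat (F g) $$ (i,j)" if "g \<in> I" "i < nc" "j < nr" for g
    using assms[OF that(1)] that(2,3) by simp
  ultimately show "transpose_mat (sum_mats nr nc F I) $$ (i,j)
      = sum_mats nc nr (\<lambda>g. transpose_mat (F g)) I $$ (i,j)"
    by (simp add: sum_mats_def)
qed (simp_all add: sum_mats_def)

lemma sum_mats_mult_vec:
  fixes F :: "'i \<Rightarrow> 'a :: comm_semiring_0 mat"
  assumes F: "\<And>g. g \<in> I \<Longrightarrow> F g \<in> carrier_mat nr nc" and v: "v \<in> carrier_vec nc"
  shows "sum_mats nr nc F I *\<^sub>v v = vec nr (\<lambda>i. \<Sum>g\<in>I. (F g *\<^sub>v v) $ i)"
proof (rule eq_vecI)
  fix i assume "i < dim_vec (vec nr (\<lambda>i. \<Sum>g\<in>I. (F g *\<^sub>v v) $ i))"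
  then have i: "i < nr" by simp
  have "(sum_mats nr nc F I *\<^sub>v v) $ i = (\<Sum>k<nc. \<Sum>g\<in>I. F g $$ (i,k) * v $ k)"
    using i v by (simp add: sum_mats_def scalar_prod_def sum_distrib_right atLeast0LessThan)
  also have "\<dots> = (\<Sum>g\<in>I. (F g *\<^sub>v v) $ i)"
  proof (subst sum.swap, rule sum.cong)
    fix g assume "g \<in> I"
    then show "(\<Sum>k<nc. F g $$ (i,k) * v $ k) = (F g *\<^sub>v v) $ i"
      using i v F[of g] by (simp add: scalar_prod_def atLeast0LessThan)
  qed simp
  finally show "(sum_mats nr nc F I *\<^sub>v v) $ i = vec nr (\<lambda>i. \<Sum>g\<in>I. (F g *\<^sub>v v) $ i) $ i"
    using i by simp
qed (simp add: sum_mats_def)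

lemma sum_mats_reindex:
  assumes "bij_betw h I J"
  shows "sum_mats nr nc (\<lambda>g. F (h g)) I = sum_mats nr nc F J"
proof -
  have "(\<Sum>g\<in>I. F (h g) $$ ij) = (\<Sum>g\<in>J. F g $$ ij)" for ij
    by (rule sum.reindex_bij_betw[OF assms])
  then show ?thesis unfolding sum_mats_def by simp
qed

lemma self_adjoint_scalar_prod:
  fixes B X :: "'a :: comm_semiring_0 mat"
  assumes B: "B \<in> carrier_mat n n" and X: "X \<in> carrier_mat n n"
    and BX: "B * X = transpose_mat X * B" and x: "x \<in> carrier_vec n" and y: "y \<in> carrier_vec n"
  shows "(X *\<^sub>v x) \<bullet> (B *\<^sub>v y) = x \<bullet> (B *\<^sub>v (X *\<^sub>v y))"
proof -
  have "(X *\<^sub>v x) \<bullet> (B *\<^sub>v y) = (B *\<^sub>v y) \<bullet> (X *\<^sub>v x)"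
    using B X x y by (intro comm_scalar_prod[of _ n]) auto
  also have "\<dots> = (transpose_mat X *\<^sub>v (B *\<^sub>v y)) \<bullet> x"
    using B X x y by (intro transpose_vec_mult_scalar[symmetric]) auto
  also have "transpose_mat X *\<^sub>v (B *\<^sub>v y) = (B * X) *\<^sub>v y"
    unfolding BX using B X y by (intro assoc_mult_mat_vec[symmetric]) auto
  also have "\<dots> = B *\<^sub>v (X *\<^sub>v y)" using B X y by (intro assoc_mult_mat_vec) auto
  also have "(B *\<^sub>v (X *\<^sub>v y)) \<bullet> x = x \<bullet> (B *\<^sub>v (X *\<^sub>v y))"
    using B X x y by (intro comm_scalar_prod[of _ n]) auto
  finally show ?thesis .
qed

lemma symmetric_form_swap:
  fixes B :: "'a :: comm_semiring_0 mat"
  assumes B: "B \<in> carrier_mat n n" "transpose_mat B = B" and x: "x \<in> carrier_vec n" and y: "y \<in> carrier_vec n"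
  shows "x \<bullet> (B *\<^sub>v y) = y \<bullet> (B *\<^sub>v x)"
proof -
  have "x \<bullet> (B *\<^sub>v y) = (B *\<^sub>v x) \<bullet> y"
    using transpose_vec_mult_scalar[OF B(1) y x] unfolding B(2) by simp
  also have "\<dots> = y \<bullet> (B *\<^sub>v x)" using B x y by (intro comm_scalar_prod[of _ n]) auto
  finally show ?thesis .
qed

lemma orthogonal_to_all_eq_zero:
  fixes v :: "'a :: semiring_1 vec"
  assumes v: "v \<in> carrier_vec n" and orth: "\<And>x. x \<in> carrier_vec n \<Longrightarrow> x \<bullet> v = 0"
  shows "v = 0\<^sub>v n"
proof (rule eq_vecI)
  fix i assume "i < dim_vec (0\<^sub>v n :: 'a vec)"
  then have i: "i < n" by simp
  show "v $ i = 0\<^sub>v n $ i"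
    using orth[OF unit_vec_carrier, of i] scalar_prod_left_unit[OF v i] i by simp
qed (use v in simp)

lemma int_submodule_invariant_sublattice:
  assumes "\<And>g. g \<in> carrier G \<Longrightarrow> \<rho> g \<in> carrier_mat n n"
  shows "int_submodule n (invariant_sublattice n G \<rho>)"
proof -
  have "\<rho> g *\<^sub>v 0\<^sub>v n = 0\<^sub>v n"
    and "x \<in> carrier_vec n \<Longrightarrow> y \<in> carrier_vec n \<Longrightarrow> \<rho> g *\<^sub>v (x + y) = \<rho> g *\<^sub>v x + \<rho> g *\<^sub>v y"
    and "x \<in> carrier_vec n \<Longrightarrow> \<rho> g *\<^sub>v (c \<cdot>\<^sub>v x) = c \<cdot>\<^sub>v (\<rho> g *\<^sub>v x)"
    if "g \<in> carrier G" for g x y and c :: int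
    using assms[OF that] by (auto simp: mult_add_distrib_mat_vec)
  then show ?thesis unfolding int_submodule_def invariant_sublattice_def by auto
qed

lemma int_submodule_orth_complement:
  assumes B: "B \<in> carrier_mat n n" and M: "M \<subseteq> carrier_vec n"
  shows "int_submodule n (orth_complement B M)"
proof -
  have "(x + y) \<bullet> (B *\<^sub>v w) = 0" "(c \<cdot>\<^sub>v x) \<bullet> (B *\<^sub>v w) = 0"
    if "x \<in> carrier_vec n" "y \<in> carrier_vec n" "w \<in> M"
      "x \<bullet> (B *\<^sub>v w) = 0" "y \<bullet> (B *\<^sub>v w) = 0" for x y w and c :: int
    using that B M by (auto simp: add_scalar_prod_distrib[of _ n])
  then show ?thesis
    using B M unfolding int_submodule_def orth_complement_def by auto
qed

locale isometric_action = group G for G :: "('g, 'b) monoid_scheme" (structure) +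
  fixes n :: nat and B :: "int mat" and \<rho> :: "'g \<Rightarrow> int mat"
  assumes B_carrier: "B \<in> carrier_mat n n" and B_symmetric: "transpose_mat B = B"
    and det_B_nonzero: "det B \<noteq> 0"
    and \<rho>_carrier: "\<And>g. g \<in> carrier G \<Longrightarrow> \<rho> g \<in> carrier_mat n n"
    and \<rho>_mult: "\<And>g h. g \<in> carrier G \<Longrightarrow> h \<in> carrier G \<Longrightarrow> \<rho> (g \<otimes> h) = \<rho> g * \<rho> h"
    and \<rho>_one: "\<rho> \<one> = 1\<^sub>m n"
    and \<rho>_isometry: "\<And>g. g \<in> carrier G \<Longrightarrow> transpose_mat (\<rho> g) * B * \<rho> g = B"
begin

abbreviation "L_inv \<equiv> invariant_sublattice n G \<rho>"
abbreviation "L_coinv \<equiv> coinvariant_sublattice B G \<rho>"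

text \<open>\<open>|G|\<close> times the \<open>B\<close>-orthogonal projections of \<open>\<rat>\<^sup>n\<close> onto \<open>\<rat> L\<^sup>G\<close> and \<open>\<rat> L\<^sub>G\<close>.\<close>

definition inv_proj :: "int mat" where
  "inv_proj = sum_mats n n \<rho> (carrier G)"

definition coinv_proj :: "int mat" where
  "coinv_proj = int (card (carrier G)) \<cdot>\<^sub>m 1\<^sub>m n - inv_proj"

lemma inv_proj_carrier: "inv_proj \<in> carrier_mat n n"
  unfolding inv_proj_def by simp

lemma coinv_proj_carrier: "coinv_proj \<in> carrier_mat n n"
  unfolding coinv_proj_def using inv_proj_carrier by (intro minus_carrier_mat) auto

lemma L_coinv_eq: "L_coinv = {v \<in> carrier_vec n. \<forall>w \<in> L_inv. v \<bullet> (B *\<^sub>v w) = 0}"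
  unfolding coinvariant_sublattice_def orth_complement_def using B_carrier by simp

lemma L_inv_carrier: "L_inv \<subseteq> carrier_vec n"
  unfolding invariant_sublattice_def by auto

lemma int_submodule_L_inv: "int_submodule n L_inv"
  by (rule int_submodule_invariant_sublattice[OF \<rho>_carrier])

lemma int_submodule_L_coinv: "int_submodule n L_coinv"
  unfolding coinvariant_sublattice_def
  using int_submodule_orth_complement[OF B_carrier L_inv_carrier] B_carrier by simp

lemma rho_mult_inv_proj:
  assumes h: "h \<in> carrier G"
  shows "\<rho> h * inv_proj = inv_proj"
proof -
  have "bij_betw (\<lambda>g. h \<otimes> g) (carrier G) (carrier G)"
    using inj_on_cmult[OF h] surj_const_mult[OF h] by (simp add: bij_betw_def)
  then have "sum_mats n n (\<lambda>g. \<rho> (h \<otimes> g)) (carrier G) = inv_proj"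
    unfolding inv_proj_def by (rule sum_mats_reindex)
  moreover have "sum_mats n n (\<lambda>g. \<rho> (h \<otimes> g)) (carrier G) = sum_mats n n (\<lambda>g. \<rho> h * \<rho> g) (carrier G)"
    using h by (intro sum_mats_cong) (simp add: \<rho>_mult)
  ultimately show ?thesis
    unfolding inv_proj_def
    using mult_sum_mats[where F = \<rho> and I = "carrier G", OF \<rho>_carrier[OF h] \<rho>_carrier] by simp
qed

lemma transpose_rho_mult_B:
  assumes g: "g \<in> carrier G"
  shows "transpose_mat (\<rho> g) * B = B * \<rho> (inv g)"
proof -
  have rg: "\<rho> g \<in> carrier_mat n n" and rig: "\<rho> (inv g) \<in> carrier_mat n n"
    and rgT: "transpose_mat (\<rho> g) \<in> carrier_mat n n" using \<rho>_carrier g by auto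
  have "transpose_mat (\<rho> g) * B = transpose_mat (\<rho> g) * B * (\<rho> g * \<rho> (inv g))"
    using g rgT B_carrier by (simp add: \<rho>_mult[symmetric] \<rho>_one)
  also have "\<dots> = (transpose_mat (\<rho> g) * B * \<rho> g) * \<rho> (inv g)"
    using rgT B_carrier rg rig by (simp add: assoc_mult_mat[of _ n n _ n _ n])
  also have "\<dots> = B * \<rho> (inv g)" using \<rho>_isometry[OF g] by simp
  finally show ?thesis .
qed

lemma inv_proj_self_adjoint: "B * inv_proj = transpose_mat inv_proj * B"
proof -
  have BS: "B * inv_proj = sum_mats n n (\<lambda>g. B * \<rho> g) (carrier G)"
    unfolding inv_proj_def by (rule mult_sum_mats[where F = \<rho>, OF B_carrier \<rho>_carrier])
  have "bij_betw (\<lambda>g. inv g) (carrier G) (carrier G)"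
    by (rule bij_betwI[of _ _ _ "\<lambda>g. inv g"]) auto
  then have reindex: "sum_mats n n (\<lambda>g. B * \<rho> (inv g)) (carrier G) = B * inv_proj"
    unfolding BS by (rule sum_mats_reindex)
  have "transpose_mat (B * inv_proj) = sum_mats n n (\<lambda>g. transpose_mat (B * \<rho> g)) (carrier G)"
    unfolding BS by (rule transpose_sum_mats) (use B_carrier \<rho>_carrier in simp)
  also have "\<dots> = sum_mats n n (\<lambda>g. B * \<rho> (inv g)) (carrier G)"
  proof (rule sum_mats_cong)
    fix g assume g: "g \<in> carrier G"
    show "transpose_mat (B * \<rho> g) = B * \<rho> (inv g)"
      using transpose_mult[OF B_carrier \<rho>_carrier[OF g]] transpose_rho_mult_B[OF g]
      unfolding B_symmetric by simp
  qed
  finally have "transpose_mat (B * inv_proj) = B * inv_proj" unfolding reindex .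
  then show ?thesis
    using transpose_mult[OF B_carrier inv_proj_carrier] unfolding B_symmetric by simp
qed

lemma inv_proj_into_invariant:
  assumes x: "x \<in> carrier_vec n"
  shows "inv_proj *\<^sub>v x \<in> L_inv"
proof -
  have "\<rho> h *\<^sub>v (inv_proj *\<^sub>v x) = inv_proj *\<^sub>v x" if h: "h \<in> carrier G" for h
    using assoc_mult_mat_vec[OF \<rho>_carrier[OF h] inv_proj_carrier x] rho_mult_inv_proj[OF h] by simp
  then show ?thesis unfolding invariant_sublattice_def using inv_proj_carrier x by simp
qed

lemma inv_proj_on_invariant:
  assumes v: "v \<in> L_inv"
  shows "inv_proj *\<^sub>v v = int (card (carrier G)) \<cdot>\<^sub>v v"
proof -
  have vc: "v \<in> carrier_vec n" and fixed: "\<And>g. g \<in> carrier G \<Longrightarrow> \<rho> g *\<^sub>v v = v"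
    using v unfolding invariant_sublattice_def by auto
  have "inv_proj *\<^sub>v v = vec n (\<lambda>i. \<Sum>g\<in>carrier G. (\<rho> g *\<^sub>v v) $ i)"
    unfolding inv_proj_def by (rule sum_mats_mult_vec[OF \<rho>_carrier vc])
  also have "\<dots> = int (card (carrier G)) \<cdot>\<^sub>v v"
    using vc by (intro eq_vecI) (simp_all add: fixed)
  finally show ?thesis .
qed

lemma B_mult_vec_eq_zero:
  assumes y: "y \<in> carrier_vec n" and "B *\<^sub>v y = 0\<^sub>v n"
  shows "y = 0\<^sub>v n"
  using det_0_iff_vec_prod_zero[OF B_carrier] det_B_nonzero assms by blast

text \<open>For \<open>w \<in> L\<^sub>G\<close> the vector \<open>B (inv_proj w)\<close> is orthogonal to everything, since
  \<open>inv_proj x \<in> L\<^sup>G\<close> for all \<open>x\<close>.\<close>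

lemma inv_proj_on_coinvariant:
  assumes w: "w \<in> L_coinv"
  shows "inv_proj *\<^sub>v w = 0\<^sub>v n"
proof (rule B_mult_vec_eq_zero)
  have wc: "w \<in> carrier_vec n" and orth: "\<And>u. u \<in> L_inv \<Longrightarrow> w \<bullet> (B *\<^sub>v u) = 0"
    using w unfolding L_coinv_eq by auto
  show "inv_proj *\<^sub>v w \<in> carrier_vec n" using inv_proj_carrier wc by simp
  have "x \<bullet> (B *\<^sub>v (inv_proj *\<^sub>v w)) = 0" if x: "x \<in> carrier_vec n" for x
  proof -
    have "x \<bullet> (B *\<^sub>v (inv_proj *\<^sub>v w)) = (inv_proj *\<^sub>v x) \<bullet> (B *\<^sub>v w)"
      by (rule self_adjoint_scalar_prod[OF B_carrier inv_proj_carrier inv_proj_self_adjoint x wc, symmetric])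
    also have "\<dots> = w \<bullet> (B *\<^sub>v (inv_proj *\<^sub>v x))"
      using inv_proj_carrier x wc by (intro symmetric_form_swap[OF B_carrier B_symmetric]) auto
    also have "\<dots> = 0" by (rule orth[OF inv_proj_into_invariant[OF x]])
    finally show ?thesis .
  qed
  then show "B *\<^sub>v (inv_proj *\<^sub>v w) = 0\<^sub>v n"
    using B_carrier inv_proj_carrier wc by (intro orthogonal_to_all_eq_zero) auto
qed

lemma coinv_proj_mult_vec:
  assumes x: "x \<in> carrier_vec n"
  shows "coinv_proj *\<^sub>v x = int (card (carrier G)) \<cdot>\<^sub>v x - inv_proj *\<^sub>v x"
proof -
  have "(int (card (carrier G)) \<cdot>\<^sub>m 1\<^sub>m n) *\<^sub>v x = int (card (carrier G)) \<cdot>\<^sub>v (1\<^sub>m n *\<^sub>v x)"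
    using x by auto
  then show ?thesis
    unfolding coinv_proj_def using x inv_proj_carrier
    by (simp add: minus_mult_distrib_mat_vec[of _ n n])
qed

lemma coinv_proj_self_adjoint: "B * coinv_proj = transpose_mat coinv_proj * B"
proof -
  let ?N = "int (card (carrier G)) \<cdot>\<^sub>m 1\<^sub>m n"
  have "B * coinv_proj = B * ?N - B * inv_proj"
    unfolding coinv_proj_def using B_carrier inv_proj_carrier by (intro mult_minus_distrib_mat) auto
  also have "B * ?N = ?N * B"
    using B_carrier by (simp add: mult_smult_distrib[OF B_carrier one_carrier_mat]
        mult_smult_assoc_mat[OF one_carrier_mat B_carrier])
  also have "?N * B - B * inv_proj = (?N - transpose_mat inv_proj) * B"
    unfolding inv_proj_self_adjoint using B_carrier inv_proj_carrier
    by (intro minus_mult_distrib_mat[symmetric]) auto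
  also have "?N - transpose_mat inv_proj = transpose_mat coinv_proj"
    unfolding coinv_proj_def using inv_proj_carrier by (intro eq_matI) auto
  finally show ?thesis .
qed

lemma coinv_proj_into_coinvariant:
  assumes x: "x \<in> carrier_vec n"
  shows "coinv_proj *\<^sub>v x \<in> L_coinv"
proof -
  have "(coinv_proj *\<^sub>v x) \<bullet> (B *\<^sub>v w) = 0" if w: "w \<in> L_inv" for w
  proof -
    have wc: "w \<in> carrier_vec n" using w L_inv_carrier by auto
    have "(coinv_proj *\<^sub>v x) \<bullet> (B *\<^sub>v w) = x \<bullet> (B *\<^sub>v (coinv_proj *\<^sub>v w))"
      by (rule self_adjoint_scalar_prod[OF B_carrier coinv_proj_carrier coinv_proj_self_adjoint x wc])
    also have "coinv_proj *\<^sub>v w = 0\<^sub>v n"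
      using coinv_proj_mult_vec[OF wc] inv_proj_on_invariant[OF w] wc by simp
    also have "B *\<^sub>v 0\<^sub>v n = 0\<^sub>v n" using B_carrier by auto
    finally show ?thesis using x by simp
  qed
  then show ?thesis unfolding L_coinv_eq using coinv_proj_carrier x by simp
qed

lemma coinv_proj_on_coinvariant:
  assumes w: "w \<in> L_coinv"
  shows "coinv_proj *\<^sub>v w = int (card (carrier G)) \<cdot>\<^sub>v w"
  using coinv_proj_mult_vec[of w] inv_proj_on_coinvariant[OF w] w unfolding L_coinv_eq by simp

end

theorem lemma8p1:
  fixes p :: int and n :: nat and B :: "int mat"
    and G :: "('g, 'b) monoid_scheme" and \<rho> :: "'g \<Rightarrow> int mat"
  assumes "prime p"
    and "group G" and "finite (carrier G)" and "\<not> p dvd int (card (carrier G))"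
    and "B \<in> carrier_mat n n" and "transpose_mat B = B" and "det B \<noteq> 0"
    and "\<And>g. g \<in> carrier G \<Longrightarrow> \<rho> g \<in> carrier_mat n n"
    and "\<And>g h. g \<in> carrier G \<Longrightarrow> h \<in> carrier G \<Longrightarrow> \<rho> (g \<otimes>\<^bsub>G\<^esub> h) = \<rho> g * \<rho> h"
    and "\<rho> \<one>\<^bsub>G\<^esub> = 1\<^sub>m n"
    and "\<And>g. g \<in> carrier G \<Longrightarrow> transpose_mat (\<rho> g) * B * \<rho> g = B"
    and "\<not> p dvd det B"
  shows "\<not> p dvd lattice_det B (invariant_sublattice n G \<rho>) * lattice_det B (coinvariant_sublattice B G \<rho>)"
proof -
  interpret isometric_action G n B \<rho>
    by (rule isometric_action.intro[OF assms(2)], unfold_locales) (use assms in auto)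
  let ?N = "int (card (carrier G))"
  have coprime: "\<not> p dvd d" if "d dvd (?N\<^sup>2 * det B) ^ r" for d r
    using that assms(1,4,12) dvd_trans by (metis prime_dvd_mult_iff prime_dvd_power)
  obtain r where "lattice_det B L_inv dvd (?N\<^sup>2 * det B) ^ r"
    using lattice_det_dvd_power[OF int_submodule_L_inv B_carrier inv_proj_carrier
        inv_proj_into_invariant inv_proj_on_invariant inv_proj_self_adjoint] by blast
  moreover obtain r' where "lattice_det B L_coinv dvd (?N\<^sup>2 * det B) ^ r'"
    using lattice_det_dvd_power[OF int_submodule_L_coinv B_carrier coinv_proj_carrier
        coinv_proj_into_coinvariant coinv_proj_on_coinvariant coinv_proj_self_adjoint] by blast
  ultimately show ?thesis using coprime assms(1) by (simp add: prime_dvd_mult_iff)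
qed

end
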